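(* Any projective plane curve invariant under $\mathcal{V}$ is defined by a homogeneous polynomial invariant under $\widetilde{\mathcal{V}}$.
   Context: Let $\rho = e^{2\pi i/3}$ and $\tau = (1+\sqrt{5})/2$. Define $Z = \mathrm{diag}(-1,1,-1)$, $T = \begin{pmatrix}0&0&1\\1&0&0\\0&1&0\end{pmatrix}$, $Q = \begin{pmatrix}1&0&0\\0&0&\rho^{2}\\0&-\rho&0\end{pmatrix}$, $P = \frac{1}{2}\begin{pmatrix}1&\tau^{-1}&-\tau\\ \tau^{-1}&\tau&1\\ \tau&-1&\tau^{-1}\end{pmatrix}$, all in $\mathrm{SL}(3,\mathbb{C})$. Let $\widetilde{\mathcal{V}} \subset \mathrm{SL}(3,\mathbb{C})$ be the group generated by $Z,T,Q,P$ and $\mathcal{V}\cong \mathfrak{A}_6$ its image in $\mathrm{PGL}(3,\mathbb{C})$, acting on $\mathbb{P}^2$ via $[A]\cdot(a:b:c)=[A(a,b,c)^t]$. A projective plane curve is a nonzero effective divisor on $\mathbb{P}^2$; it is invariant under $\mathcal{V}$ if $\sigma_*C = C$ for all $\sigma \in \mathcal{V}$. For $A\in \mathrm{GL}(3,\mathbb{C})$ and a homogeneous polynomial $f$, $f^A(\mathbf{x}) = f(A\mathbf{x})$; $f$ is $\widetilde{\mathcal{V}}$-invariant if $f^A = f$ for all $A\in\widetilde{\mathcal{V}}$. *)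

theory Defs
  imports "HOL-Analysis.Analysis"
begin

definition rho :: complex where "rho = cis (2 * pi / 3)"
definition tau :: complex where "tau = complex_of_real ((1 + sqrt 5) / 2)"

definition mat3 :: "complex list list \<Rightarrow> complex^3^3" where
  "mat3 rs = vector (map vector rs)"

definition Zm :: "complex^3^3" where "Zm = mat3 [[-1,0,0],[0,1,0],[0,0,-1]]"
definition Tm :: "complex^3^3" where "Tm = mat3 [[0,0,1],[1,0,0],[0,1,0]]"
definition Qm :: "complex^3^3" where "Qm = mat3 [[1,0,0],[0,0,rho^2],[0,-rho,0]]"
definition Pm :: "complex^3^3" where
  "Pm = (1/2) *\<^sub>R mat3 [[1, inverse tau, -tau],[inverse tau, tau, 1],[tau, -1, inverse tau]]"

inductive_set Vtilde :: "(complex^3^3) set" where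
  one: "mat 1 \<in> Vtilde"
| mul: "A \<in> {Zm, Tm, Qm, Pm} \<Longrightarrow> B \<in> Vtilde \<Longrightarrow> A ** B \<in> Vtilde"
| mul_inv: "A \<in> {Zm, Tm, Qm, Pm} \<Longrightarrow> B \<in> Vtilde \<Longrightarrow> matrix_inv A ** B \<in> Vtilde"

text \<open>Homogeneous polynomials of degree d in three variables, viewed as polynomial
  functions on C^3 (over C a polynomial is determined by its function):
  the sum over all monomials x1^i x2^j x3^(d-i-j) with coefficients c i j.\<close>
definition hom_poly :: "nat \<Rightarrow> (complex^3 \<Rightarrow> complex) \<Rightarrow> bool" where
  "hom_poly d f \<longleftrightarrow> (\<exists>c :: nat \<Rightarrow> nat \<Rightarrow> complex.
      f = (\<lambda>x. \<Sum>i\<le>d. \<Sum>j\<le>d - i. c i j * (x$1)^i * (x$2)^j * (x$3)^(d - i - j)))"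

definition poly_act :: "(complex^3 \<Rightarrow> complex) \<Rightarrow> complex^3^3 \<Rightarrow> (complex^3 \<Rightarrow> complex)" where
  "poly_act f A = (\<lambda>x. f (A *v x))"

text \<open>A projective plane curve (nonzero effective divisor on P^2) is div(f) for a
  nonzero homogeneous f of positive degree, and div(f) = div(g) iff g is a nonzero
  scalar multiple of f. We represent the divisor div(f) by the set of its defining
  polynomials.\<close>
definition curve_of :: "(complex^3 \<Rightarrow> complex) \<Rightarrow> (complex^3 \<Rightarrow> complex) set" where
  "curve_of f = {g. \<exists>c. c \<noteq> 0 \<and> g = (\<lambda>x. c * f x)}"

definition is_plane_curve :: "(complex^3 \<Rightarrow> complex) set \<Rightarrow> bool" where
  "is_plane_curve C \<longleftrightarrow> (\<exists>d f. d \<ge> 1 \<and> hom_poly d f \<and> f \<noteq> (\<lambda>_. 0) \<and> C = curve_of f)"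

definition defined_by :: "(complex^3 \<Rightarrow> complex) set \<Rightarrow> (complex^3 \<Rightarrow> complex) \<Rightarrow> bool" where
  "defined_by C f \<longleftrightarrow> C = curve_of f"

text \<open>Push-forward of a curve under the projectivity [A]: if C = div(f) then
  [A]_* C = div(f^(A^-1)).\<close>
definition push_curve :: "complex^3^3 \<Rightarrow> (complex^3 \<Rightarrow> complex) set \<Rightarrow> (complex^3 \<Rightarrow> complex) set" where
  "push_curve A C = (\<lambda>g. poly_act g (matrix_inv A)) ` C"

text \<open>Invariance under the image V of Vtilde in PGL(3,C).\<close>
definition V_invariant_curve :: "(complex^3 \<Rightarrow> complex) set \<Rightarrow> bool" where
  "V_invariant_curve C \<longleftrightarrow> (\<forall>A\<in>Vtilde. push_curve A C = C)"

definition Vtilde_invariant_poly :: "(complex^3 \<Rightarrow> complex) \<Rightarrow> bool" where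
  "Vtilde_invariant_poly f \<longleftrightarrow> (\<forall>A\<in>Vtilde. poly_act f A = f)"

end

theory Submission
  imports Defs
begin

(* If C = div f is invariant, every generator A maps f to a multiple c(A) f, and these
   multipliers are multiplicative along products. In SL(3,C) the generators satisfy
   Z^2 = T^3 = Q^4 = P^5 = (ZT)^3 = (ZP)^3 = (T^2 P)^2 = (TPQ)^3 = 1, which makes each
   multiplier a root of unity of two coprime orders: z^2 = z^3 = 1, then p^3 = p^5 = 1,
   t^3 = t^4 = 1 and q^3 = q^4 = 1. So all multipliers are 1 and f itself is invariant. *)

lemma power_gcd_eq_1:
  fixes x :: "'a::monoid_mult"
  assumes "x ^ m = 1" and "x ^ n = 1"
  shows "x ^ gcd m n = 1"
proof (cases "m = 0")
  case True
  then show ?thesis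
    using assms(2) by simp
next
  case False
  then obtain a b where bezout: "m * a = n * b + gcd m n"
    using bezout_nat by blast
  have "1 = x ^ (m * a)"
    by (simp add: power_mult assms(1))
  also have "\<dots> = x ^ gcd m n"
    by (simp add: bezout power_add power_mult assms(2))
  finally show ?thesis
    by simp
qed

primrec mat_pow :: "'a::semiring_1^'n^'n \<Rightarrow> nat \<Rightarrow> 'a^'n^'n" where
  "mat_pow A 0 = mat 1"
| "mat_pow A (Suc n) = A ** mat_pow A n"

lemma mat_pow_numeral: "mat_pow A (numeral k) = A ** mat_pow A (pred_numeral k)"
  by (simp add: numeral_eq_Suc)

lemma matrix_inv_inverse:
  fixes A :: "'a::semiring_1^'n^'n"
  assumes "invertible A"
  shows "A ** matrix_inv A = mat 1" and "matrix_inv A ** A = mat 1"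
proof -
  have "\<exists>A'. A ** A' = mat 1 \<and> A' ** A = mat 1"
    using assms unfolding invertible_def .
  then have "A ** matrix_inv A = mat 1 \<and> matrix_inv A ** A = mat 1"
    unfolding matrix_inv_def by (rule someI_ex)
  then show "A ** matrix_inv A = mat 1" and "matrix_inv A ** A = mat 1"
    by auto
qed

lemma invertible_if_mat_pow_eq_1:
  fixes A :: "'a::field^'n^'n"
  assumes "mat_pow A n = mat 1" and "n > 0"
  shows "invertible A"
proof -
  obtain m where "n = Suc m"
    using assms(2) gr0_conv_Suc by blast
  then have "A ** mat_pow A m = mat 1"
    using assms(1) by simp
  then show ?thesis
    unfolding invertible_right_inverse by blast
qed

lemma poly_act_mat_1: "poly_act f (mat 1) = f"
  unfolding poly_act_def by simp

lemma poly_act_mult: "poly_act f (A ** B) = poly_act (poly_act f A) B"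
  unfolding poly_act_def by (simp add: matrix_vector_mul_assoc)

definition semi_invariant :: "(complex^3 \<Rightarrow> complex) \<Rightarrow> complex^3^3 \<Rightarrow> complex \<Rightarrow> bool" where
  "semi_invariant f A c \<longleftrightarrow> poly_act f A = (\<lambda>x. c * f x)"

lemma semi_invariant_mult:
  assumes "semi_invariant f A a" and "semi_invariant f B b"
  shows "semi_invariant f (A ** B) (a * b)"
  using assms unfolding semi_invariant_def poly_act_mult by (simp add: poly_act_def fun_eq_iff)

lemma semi_invariant_mat_pow:
  assumes "semi_invariant f A a"
  shows "semi_invariant f (mat_pow A n) (a ^ n)"
proof (induction n)
  case 0
  then show ?case
    by (simp add: semi_invariant_def poly_act_mat_1)
next
  case (Suc n)
  then show ?case
    using semi_invariant_mult[OF assms] by simp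
qed

lemma semi_invariant_root_of_unity:
  assumes "f \<noteq> (\<lambda>_. 0)" and "semi_invariant f A a" and "mat_pow A n = mat 1"
  shows "a ^ n = 1"
proof -
  obtain x where "f x \<noteq> 0"
    using assms(1) by auto
  moreover have "f = (\<lambda>x. a ^ n * f x)"
    using semi_invariant_mat_pow[OF assms(2), of n]
    unfolding assms(3) semi_invariant_def poly_act_mat_1 .
  then have "f x = a ^ n * f x"
    by (rule fun_cong)
  ultimately show ?thesis
    by simp
qed

lemma semi_invariant_if_push_curve_eq:
  assumes "invertible A" and "push_curve A (curve_of f) = curve_of f"
  shows "\<exists>c. semi_invariant f A c"
proof -
  have "f \<in> curve_of f"
    unfolding curve_of_def by (rule CollectI, rule exI[of _ 1]) simp
  then have "poly_act f (matrix_inv A) \<in> curve_of f"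
    using assms(2) unfolding push_curve_def by blast
  then obtain c where "c \<noteq> 0" and c: "poly_act f (matrix_inv A) = (\<lambda>x. c * f x)"
    unfolding curve_of_def by blast
  have "poly_act f (matrix_inv A ** A) = poly_act (\<lambda>x. c * f x) A"
    unfolding poly_act_mult c ..
  then have "f = (\<lambda>x. c * poly_act f A x)"
    unfolding matrix_inv_inverse(2)[OF assms(1)] poly_act_mat_1 by (simp add: poly_act_def)
  then have "semi_invariant f A (inverse c)"
    using \<open>c \<noteq> 0\<close> unfolding semi_invariant_def by (simp add: fun_eq_iff)
  then show ?thesis ..
qed

lemma mat3_mult:
  "mat3 [[a11,a12,a13],[a21,a22,a23],[a31,a32,a33]] ** mat3 [[b11,b12,b13],[b21,b22,b23],[b31,b32,b33]]
   = mat3 [[a11*b11+a12*b21+a13*b31, a11*b12+a12*b22+a13*b32, a11*b13+a12*b23+a13*b33],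
           [a21*b11+a22*b21+a23*b31, a21*b12+a22*b22+a23*b32, a21*b13+a22*b23+a23*b33],
           [a31*b11+a32*b21+a33*b31, a31*b12+a32*b22+a33*b32, a31*b13+a32*b23+a33*b33]]"
  unfolding mat3_def matrix_matrix_mult_def by (simp add: vec_eq_iff forall_3 sum_3 vector_3)

lemma mat3_eq_iff:
  "mat3 [[a11,a12,a13],[a21,a22,a23],[a31,a32,a33]] = mat3 [[b11,b12,b13],[b21,b22,b23],[b31,b32,b33]]
   \<longleftrightarrow> a11 = b11 \<and> a12 = b12 \<and> a13 = b13 \<and> a21 = b21 \<and> a22 = b22 \<and> a23 = b23 \<and>
       a31 = b31 \<and> a32 = b32 \<and> a33 = b33"
  unfolding mat3_def by (simp add: vec_eq_iff forall_3 vector_3)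

lemma mat_1_eq_mat3: "mat 1 = mat3 [[1,0,0],[0,1,0],[0,0,1]]"
  unfolding mat3_def by (simp add: vec_eq_iff forall_3 vector_3 mat_def)

lemmas mat3_pow_simps =
  mat_pow_numeral pred_numeral_simps BitM.simps mat_pow.simps(1) matrix_mul_rid
  mat3_mult mat_1_eq_mat3 mat3_eq_iff

lemma tau_squared: "tau\<^sup>2 = tau + 1"
proof -
  have "((1 + sqrt 5) / 2)\<^sup>2 = (1 + sqrt 5) / 2 + (1::real)"
    by (simp add: power2_eq_square field_simps)
  then show ?thesis
    unfolding tau_def by (metis of_real_1 of_real_add of_real_power)
qed

lemma inverse_tau: "inverse tau = tau - 1"
proof -
  have "(1 + sqrt 5) / 2 > (0::real)"
    by (simp add: add_pos_nonneg)
  then have "tau \<noteq> 0"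
    unfolding tau_def by (metis of_real_eq_0_iff less_irrefl)
  then show ?thesis
    using tau_squared by (simp add: field_simps power2_eq_square)
qed

lemma rho_squared_plus_rho: "rho\<^sup>2 + rho + 1 = 0"
proof -
  have "rho ^ 3 = cis (3 * (2 * pi / 3))"
    unfolding rho_def Complex.DeMoivre by simp
  then have "rho ^ 3 = 1"
    by simp
  moreover have "rho \<noteq> 1"
  proof
    assume "rho = 1"
    then have "Im rho = 0"
      by simp
    moreover have "sin (2 * pi / 3) > 0"
      by (rule sin_gt_zero) auto
    ultimately show False
      unfolding rho_def by simp
  qed
  moreover have "rho ^ 3 - 1 = (rho - 1) * (rho\<^sup>2 + rho + 1)"
    by (simp add: algebra_simps power2_eq_square power3_eq_cube)
  ultimately show ?thesis
    by simp
qed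

text \<open>Writing the scalar 1/2 as an indeterminate h with 2 h = 1 keeps the entries of
  products of generators polynomial in h, tau and rho; the Groebner basis method algebra
  does not handle division by numerals.\<close>
lemma Pm_mat3:
  obtains h where "Pm = mat3 [[h, h * (tau - 1), - h * tau], [h * (tau - 1), h * tau, h], [h * tau, - h, h * (tau - 1)]]"
    and "2 * h = 1"
proof -
  have "Pm = mat3 [[h, h * (tau - 1), - h * tau], [h * (tau - 1), h * tau, h], [h * tau, - h, h * (tau - 1)]]"
    if "h = 1 / 2" for h
    unfolding Pm_def mat3_def inverse_tau that
    by (simp add: vec_eq_iff forall_3 vector_3) (simp add: scaleR_conv_of_real)
  from this[OF refl] show thesis
    by (rule that) simp
qed

lemma mat_pow_Zm: "mat_pow Zm 2 = mat 1"
  unfolding Zm_def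
  by (simp only: mat3_pow_simps; intro conjI; ((simp; fail) | algebra))

lemma mat_pow_Tm: "mat_pow Tm 3 = mat 1"
  unfolding Tm_def
  by (simp only: mat3_pow_simps; intro conjI; ((simp; fail) | algebra))

lemma mat_pow_Qm: "mat_pow Qm 4 = mat 1"
  unfolding Qm_def
  by (simp only: mat3_pow_simps; intro conjI;
      ((simp; fail) | use rho_squared_plus_rho in algebra))

lemma mat_pow_ZT: "mat_pow (Zm ** Tm) 3 = mat 1"
  unfolding Zm_def Tm_def
  by (simp only: mat3_pow_simps; intro conjI; ((simp; fail) | algebra))

lemma mat_pow_Pm: "mat_pow Pm 5 = mat 1"
  by (rule Pm_mat3, erule ssubst)
    (simp only: Zm_def Tm_def Qm_def mat3_pow_simps; intro conjI;
      ((simp; fail) | use tau_squared in algebra))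

lemma mat_pow_ZP: "mat_pow (Zm ** Pm) 3 = mat 1"
  by (rule Pm_mat3, erule ssubst)
    (simp only: Zm_def Tm_def Qm_def mat3_pow_simps; intro conjI;
      ((simp; fail) | use tau_squared in algebra))

lemma mat_pow_TTP: "mat_pow (Tm ** Tm ** Pm) 2 = mat 1"
  by (rule Pm_mat3, erule ssubst)
    (simp only: Zm_def Tm_def Qm_def mat3_pow_simps; intro conjI;
      ((simp; fail) | use tau_squared in algebra))

lemma mat_pow_TPQ: "mat_pow (Tm ** Pm ** Qm) 3 = mat 1"
  by (rule Pm_mat3, erule ssubst)
    (simp only: Zm_def Tm_def Qm_def mat3_pow_simps; intro conjI;
      ((simp; fail) | use tau_squared rho_squared_plus_rho in algebra))

lemma generator_multipliers_eq_1:
  fixes z t q p :: "'a::comm_monoid_mult"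
  assumes "z ^ 2 = 1" "t ^ 3 = 1" "q ^ 4 = 1" "p ^ 5 = 1"
    and "(z * t) ^ 3 = 1" "(z * p) ^ 3 = 1" "(t * t * p) ^ 2 = 1" "(t * p * q) ^ 3 = 1"
  shows "z = 1" "p = 1" "t = 1" "q = 1"
proof -
  have "z ^ 3 = 1"
    using assms(2,5) by (simp add: power_mult_distrib)
  from power_gcd_eq_1[OF assms(1) this] show "z = 1"
    by (simp add: gcd_non_0_nat)
  then have "p ^ 3 = 1"
    using assms(6) by simp
  from power_gcd_eq_1[OF this assms(4)] show "p = 1"
    by (simp add: gcd_non_0_nat)
  then have "t ^ 4 = 1"
    using assms(7) by (simp add: power_mult_distrib power_add[symmetric])
  from power_gcd_eq_1[OF assms(2) this] show "t = 1"
    by (simp add: gcd_non_0_nat)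
  with \<open>p = 1\<close> have "q ^ 3 = 1"
    using assms(8) by simp
  from power_gcd_eq_1[OF this assms(3)] show "q = 1"
    by (simp add: gcd_non_0_nat)
qed

lemma generators_invertible:
  assumes "A \<in> {Zm, Tm, Qm, Pm}"
  shows "invertible A"
proof -
  have "invertible Zm" "invertible Tm" "invertible Qm" "invertible Pm"
    by (rule invertible_if_mat_pow_eq_1, (rule mat_pow_Zm mat_pow_Tm mat_pow_Qm mat_pow_Pm), simp)+
  then show ?thesis
    using assms by blast
qed

lemma generators_in_Vtilde:
  assumes "A \<in> {Zm, Tm, Qm, Pm}"
  shows "A \<in> Vtilde"
  using Vtilde.mul[OF assms Vtilde.one] by simp

lemma Vtilde_invariant_polyI:
  assumes "\<And>A. A \<in> {Zm, Tm, Qm, Pm} \<Longrightarrow> poly_act f A = f"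
  shows "Vtilde_invariant_poly f"
  unfolding Vtilde_invariant_poly_def
proof
  fix A
  assume "A \<in> Vtilde"
  then show "poly_act f A = f"
  proof (induction rule: Vtilde.induct)
    case one
    then show ?case
      by (rule poly_act_mat_1)
  next
    case (mul A B)
    then show ?case
      using assms by (simp add: poly_act_mult)
  next
    case (mul_inv A B)
    have "poly_act f (matrix_inv A) = poly_act (poly_act f A) (matrix_inv A)"
      using assms[OF mul_inv(1)] by simp
    also have "\<dots> = f"
      unfolding poly_act_mult[symmetric] matrix_inv_inverse(1)[OF generators_invertible[OF mul_inv(1)]]
      by (rule poly_act_mat_1)
    finally show ?case
      using mul_inv(3) by (simp add: poly_act_mult)
  qed
qed

lemma generators_fix_equation_of_invariant_curve:
  assumes "f \<noteq> (\<lambda>_. 0)" and "V_invariant_curve (curve_of f)" and "A \<in> {Zm, Tm, Qm, Pm}"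
  shows "poly_act f A = f"
proof -
  have "\<exists>c. semi_invariant f S c" if "S \<in> {Zm, Tm, Qm, Pm}" for S
  proof (rule semi_invariant_if_push_curve_eq)
    show "invertible S"
      using that by (rule generators_invertible)
    show "push_curve S (curve_of f) = curve_of f"
      using assms(2) generators_in_Vtilde[OF that] unfolding V_invariant_curve_def by blast
  qed
  then obtain z t q p where
    z: "semi_invariant f Zm z" and t: "semi_invariant f Tm t" and
    q: "semi_invariant f Qm q" and p: "semi_invariant f Pm p"
    by (meson insertCI)
  note relation = semi_invariant_root_of_unity[OF assms(1)]
  note mult = semi_invariant_mult
  note multipliers = generator_multipliers_eq_1[OF relation[OF z mat_pow_Zm] relation[OF t mat_pow_Tm]
      relation[OF q mat_pow_Qm] relation[OF p mat_pow_Pm] relation[OF mult[OF z t] mat_pow_ZT]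
      relation[OF mult[OF z p] mat_pow_ZP] relation[OF mult[OF mult[OF t t] p] mat_pow_TTP]
      relation[OF mult[OF mult[OF t p] q] mat_pow_TPQ]]
  show ?thesis
    using assms(3) z t q p unfolding multipliers semi_invariant_def by auto
qed

theorem mainTheorem9:
  assumes "is_plane_curve C" and "V_invariant_curve C"
  shows "\<exists>d f. hom_poly d f \<and> defined_by C f \<and> Vtilde_invariant_poly f"
proof -
  obtain d f where "hom_poly d f" and "f \<noteq> (\<lambda>_. 0)" and C: "C = curve_of f"
    using assms(1) unfolding is_plane_curve_def by blast
  moreover have "Vtilde_invariant_poly f"
    using generators_fix_equation_of_invariant_curve[OF \<open>f \<noteq> (\<lambda>_. 0)\<close> assms(2)[unfolded C]]
    by (rule Vtilde_invariant_polyI)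
  ultimately show ?thesis
    unfolding defined_by_def by blast
qed

end
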